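(* Let $G = (V, E, b, c)$ be a weighted hypergraph and run procedure COVER on the stream of its edges. For every integer $r$, the edge collection $S(r) = \{ e \in E \mid \exists v \in V \text{ with } \mathrm{eff}_\infty(v) = r \text{ and } \mathrm{eid}_\infty(v) = \mathrm{id}(e) \}$ satisfies \[ c(S(r)) < b(V) / 2^{r-1}. \]
   Context: A weighted hypergraph $G = (V, E, b, c)$ has vertex set $V$, a multiset $E$ of non-empty edges $e \subseteq V$, benefits $b : V \to \mathbb{Q}_{>0}$ and costs $c : E \to \mathbb{Q}_{>0}$; $b(U) = \sum_{v \in U} b(v)$, $c(F) = \sum_{e \in F} c(e)$. Edges arrive in a stream $e_0, e_1, \dots$, and $\mathrm{id}(e)$ is a unique identifier of edge $e$. Procedure COVER maintains for each $v \in V$ a variable $\mathrm{eid}(v)$ (initially NULL) and an integer variable $\mathrm{eff}(v)$ (initially $-\infty$); $\mathrm{eff}_t(v)$ denotes its value just before $e_t$ is processed, and $\mathrm{eff}_\infty(v)$, $\mathrm{eid}_\infty(v)$ the values after the whole stream has been processed. For $T \subseteq e_t$ the level is $\mathrm{lev}_t(T) = \lceil \lg (b(T)/c(e_t)) \rceil$ ($\lg$ = base-2 logarithm), and $T$ is effective at time $t$ if $\mathrm{lev}_t(T) > \mathrm{eff}_t(v)$ for every $v \in T$ (the empty set is vacuously effective). When $e_t$ arrives, COVER computes an effective subset $T \subseteq e_t$ of largest benefit $b(T)$ (any such subset) and, for every $v \in T$, sets $\mathrm{eid}(v) \leftarrow \mathrm{id}(e_t)$ and $\mathrm{eff}(v)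 \leftarrow \mathrm{lev}_t(T)$. *)

theory Defs
  imports Complex_Main
begin

text \<open>The stream of edges is a list es; the edge e_t = es ! t has identifier t.
  Costs are given per stream position (E is a multiset): c t = c(e_t).
  eid(v) :: nat option (None = NULL), eff(v) :: int option (None = minus infinity).\<close>

type_synonym 'v cover_state = "('v \<Rightarrow> nat option) \<times> ('v \<Rightarrow> int option)"

definition cover_init :: "'v cover_state" where
  "cover_init = ((\<lambda>_. None), (\<lambda>_. None))"

definition lev :: "('v \<Rightarrow> rat) \<Rightarrow> rat \<Rightarrow> 'v set \<Rightarrow> int" where
  "lev b ce T = \<lceil>log 2 (real_of_rat (sum b T / ce))\<rceil>"

definition above_eff :: "int \<Rightarrow> int option \<Rightarrow> bool" where
  "above_eff l x = (case x of None \<Rightarrow> True | Some k \<Rightarrow> k < l)"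

definition effective :: "('v \<Rightarrow> rat) \<Rightarrow> rat \<Rightarrow> 'v set \<Rightarrow> ('v \<Rightarrow> int option) \<Rightarrow> 'v set \<Rightarrow> bool" where
  "effective b ce e eff T = (T \<subseteq> e \<and> (\<forall>v\<in>T. above_eff (lev b ce T) (eff v)))"

definition max_effective :: "('v \<Rightarrow> rat) \<Rightarrow> rat \<Rightarrow> 'v set \<Rightarrow> ('v \<Rightarrow> int option) \<Rightarrow> 'v set \<Rightarrow> bool" where
  "max_effective b ce e eff T =
     (effective b ce e eff T \<and> (\<forall>T'. effective b ce e eff T' \<longrightarrow> sum b T' \<le> sum b T))"

definition cover_step :: "('v \<Rightarrow> rat) \<Rightarrow> rat \<Rightarrow> 'v set \<Rightarrow> nat \<Rightarrow> 'v cover_state \<Rightarrow> 'v cover_state \<Rightarrow> bool" where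
  "cover_step b ce e i s s' =
     (\<exists>T. max_effective b ce e (snd s) T \<and>
          s' = ((\<lambda>v. if v \<in> T then Some i else fst s v),
                (\<lambda>v. if v \<in> T then Some (lev b ce T) else snd s v)))"

text \<open>ss ! t is the state just before e_t is processed; last ss is the final state.\<close>
definition cover_run :: "('v \<Rightarrow> rat) \<Rightarrow> (nat \<Rightarrow> rat) \<Rightarrow> 'v set list \<Rightarrow> 'v cover_state list \<Rightarrow> bool" where
  "cover_run b c es ss =
     (length ss = Suc (length es) \<and> ss ! 0 = cover_init \<and>
      (\<forall>t < length es. cover_step b (c t) (es ! t) t (ss ! t) (ss ! Suc t)))"

definition weighted_hypergraph :: "'v set \<Rightarrow> 'v set list \<Rightarrow> ('v \<Rightarrow> rat) \<Rightarrow> (nat \<Rightarrow> rat) \<Rightarrow> bool" where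
  "weighted_hypergraph V es b c =
     (finite V \<and> (\<forall>t < length es. es ! t \<noteq> {} \<and> es ! t \<subseteq> V) \<and>
      (\<forall>v\<in>V. b v > 0) \<and> (\<forall>t < length es. c t > 0))"

end

theory Submission
  imports Defs
begin

text \<open>Let T_t be the set COVER assigns when processing e_t. Every vertex's effectiveness can
  only grow, and T_t of level r requires all its vertices to have effectiveness below r. Hence the sets chosen at level r
  by the edges that end up owning a vertex of final level r are pairwise disjoint subsets
  of V. Each such edge e_t has level r, i.e. c(e_t) < b(T_t) / 2^(r-1), and summing over
  the disjoint T_t gives c(S(r)) < b(V) / 2^(r-1).\<close>

lemma of_rat_two_powi: "real_of_rat ((2::rat) powi k) = (2::real) powi k"
  by (cases "k \<ge> 0") (auto simp: power_int_def of_rat_power of_rat_inverse of_rat_divide)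

lemma two_powi_less_of_ceiling_log:
  fixes x :: rat
  assumes "x > 0"
  shows "2 powi (\<lceil>log 2 (real_of_rat x)\<rceil> - 1) < x"
proof -
  let ?r = "\<lceil>log 2 (real_of_rat x)\<rceil>"
  have "real_of_int (?r - 1) < log 2 (real_of_rat x)" by linarith
  then have "2 powr real_of_int (?r - 1) < real_of_rat x"
    using assms by (simp add: less_log_iff)
  also have "2 powr real_of_int (?r - 1) = real_of_rat (2 powi (?r - 1))"
    using powr_real_of_int'[of 2 "?r - 1"] by (simp add: of_rat_two_powi)
  finally have "real_of_rat (2 powi (?r - 1)) < real_of_rat x" .
  then show ?thesis by (simp add: of_rat_less)
qed

lemma cost_less_by_lev:
  assumes "sum b T > 0" and "ce > 0"
  shows "ce < sum b T / 2 powi (lev b ce T - 1)"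
proof -
  have "2 powi (lev b ce T - 1) < sum b T / ce"
    unfolding lev_def using assms by (intro two_powi_less_of_ceiling_log) simp
  then show ?thesis using assms(2) by (simp add: field_simps)
qed

lemma sum_disjoint_family_le:
  fixes b :: "'a \<Rightarrow> 'b::ordered_comm_monoid_add"
  assumes "finite V" "finite I" "\<And>v. v \<in> V \<Longrightarrow> b v \<ge> 0"
    and "\<And>i. i \<in> I \<Longrightarrow> A i \<subseteq> V"
    and "\<And>i j. i \<in> I \<Longrightarrow> j \<in> I \<Longrightarrow> i \<noteq> j \<Longrightarrow> A i \<inter> A j = {}"
  shows "(\<Sum>i\<in>I. sum b (A i)) \<le> sum b V"
proof -
  have "(\<Sum>i\<in>I. sum b (A i)) = sum b (\<Union>i\<in>I. A i)"
    using assms by (intro sum.UNION_disjoint[symmetric]) (auto intro: finite_subset)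
  also have "\<dots> \<le> sum b V"
    using assms by (intro sum_mono2) auto
  finally show ?thesis .
qed

locale cover_execution =
  fixes b :: "'v \<Rightarrow> rat" and c :: "nat \<Rightarrow> rat" and es :: "'v set list"
    and ss :: "'v cover_state list"
  assumes run: "cover_run b c es ss"
begin

abbreviation eid :: "nat \<Rightarrow> 'v \<Rightarrow> nat option" where "eid t \<equiv> fst (ss ! t)"
abbreviation eff :: "nat \<Rightarrow> 'v \<Rightarrow> int option" where "eff t \<equiv> snd (ss ! t)"

text \<open>cover_step only asserts that some maximum-benefit effective set was used; recover it.\<close>
definition chosen :: "nat \<Rightarrow> 'v set" where
  "chosen t = (SOME T. max_effective b (c t) (es ! t) (eff t) T \<and>
     ss ! Suc t = ((\<lambda>v. if v \<in> T then Some t else eid t v),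
                   (\<lambda>v. if v \<in> T then Some (lev b (c t) T) else eff t v)))"

abbreviation level :: "nat \<Rightarrow> int" where "level t \<equiv> lev b (c t) (chosen t)"

lemma length_states: "length ss = Suc (length es)"
  using run by (simp add: cover_run_def)

lemma last_states: "last ss = ss ! length es"
  using length_states by (metis diff_Suc_1 last_conv_nth list.size(3) nat.distinct(1))

lemma chosen_spec:
  assumes "t < length es"
  shows "max_effective b (c t) (es ! t) (eff t) (chosen t) \<and>
     ss ! Suc t = ((\<lambda>v. if v \<in> chosen t then Some t else eid t v),
                   (\<lambda>v. if v \<in> chosen t then Some (level t) else eff t v))"
  unfolding chosen_def
  by (rule someI_ex) (use run assms in \<open>auto simp: cover_run_def cover_step_def\<close>)

lemma chosen_subset: "t < length es \<Longrightarrow> chosen t \<subseteq> es ! t"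
  using chosen_spec by (auto simp: max_effective_def effective_def)

lemma chosen_above_eff: "t < length es \<Longrightarrow> v \<in> chosen t \<Longrightarrow> above_eff (level t) (eff t v)"
  using chosen_spec by (auto simp: max_effective_def effective_def)

lemma eid_Suc: "t < length es \<Longrightarrow> eid (Suc t) v = (if v \<in> chosen t then Some t else eid t v)"
  using chosen_spec by simp

lemma eff_Suc: "t < length es \<Longrightarrow> eff (Suc t) v = (if v \<in> chosen t then Some (level t) else eff t v)"
  using chosen_spec by simp

lemma eff_mono:
  assumes "t \<le> t'" "t' \<le> length es" "eff t v = Some k"
  shows "\<exists>k'. eff t' v = Some k' \<and> k \<le> k'"
  using assms
proof (induction t' rule: dec_induct)
  case base
  then show ?case by simp
next
  case (step t')
  then obtain k' where k': "eff t' v = Some k'" "k \<le> k'" by auto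
  show ?case
  proof (cases "v \<in> chosen t'")
    case True
    then have "k' < level t'"
      using chosen_above_eff[of t' v] step.prems k'(1) by (simp add: above_eff_def)
    then show ?thesis using True eff_Suc[of t'] step.prems k' by simp
  next
    case False
    then show ?thesis using eff_Suc[of t'] step.prems k' by simp
  qed
qed

lemma eid_owner:
  assumes "m \<le> length es" "eid m v = Some t"
  shows "t < m \<and> v \<in> chosen t \<and> eff m v = Some (level t)"
  using assms
proof (induction m)
  case 0
  then show ?case using run by (simp add: cover_run_def cover_init_def)
next
  case (Suc m)
  then show ?case
    using eid_Suc[of m v] eff_Suc[of m v] by (cases "v \<in> chosen m") auto
qed

lemma chosen_disjoint_same_level:
  assumes "t < t'" "t' < length es" "level t = level t'"
  shows "chosen t \<inter> chosen t' = {}"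
proof (rule ccontr)
  assume "chosen t \<inter> chosen t' \<noteq> {}"
  then obtain w where w: "w \<in> chosen t" "w \<in> chosen t'" by auto
  have "eff (Suc t) w = Some (level t)" using eff_Suc[of t w] w(1) assms by simp
  then obtain k where k: "eff t' w = Some k" "level t \<le> k"
    using eff_mono[of "Suc t" t' w] assms by auto
  moreover have "above_eff (level t') (eff t' w)" using chosen_above_eff assms(2) w(2) .
  ultimately show False using assms(3) by (simp add: above_eff_def)
qed

end

theorem lemma9:
  fixes V :: "'v set" and es :: "'v set list" and b :: "'v \<Rightarrow> rat" and c :: "nat \<Rightarrow> rat"
    and ss :: "'v cover_state list" and r :: int
  assumes "weighted_hypergraph V es b c"
    and "V \<noteq> {}"
    and "cover_run b c es ss"
  shows "sum c {t. t < length es \<and>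
                 (\<exists>v\<in>V. snd (last ss) v = Some r \<and> fst (last ss) v = Some t)}
         < sum b V / (2::rat) powi (r - 1)"
proof -
  interpret cover_execution b c es ss using assms(3) by unfold_locales
  have fin: "finite V" and edges: "\<And>t. t < length es \<Longrightarrow> es ! t \<subseteq> V"
    and bpos: "\<And>v. v \<in> V \<Longrightarrow> b v > 0" and cpos: "\<And>t. t < length es \<Longrightarrow> c t > 0"
    using assms(1) by (auto simp: weighted_hypergraph_def)
  define S where "S = {t. t < length es \<and>
                 (\<exists>v\<in>V. snd (last ss) v = Some r \<and> fst (last ss) v = Some t)}"
  have owner: "t < length es \<and> level t = r \<and> chosen t \<noteq> {}" if "t \<in> S" for t
    using that eid_owner[of "length es"] by (auto simp: S_def last_states)
  have chosen_V: "chosen t \<subseteq> V" if "t \<in> S" for t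
    using owner[OF that] chosen_subset edges by blast
  have cost: "c t < sum b (chosen t) / 2 powi (r - 1)" if "t \<in> S" for t
  proof -
    have "sum b (chosen t) > 0"
      using owner[OF that] chosen_V[OF that] fin bpos by (intro sum_pos) (auto intro: finite_subset)
    then show ?thesis using cost_less_by_lev cpos owner[OF that] by metis
  qed
  have disjoint: "chosen i \<inter> chosen j = {}" if "i \<in> S" "j \<in> S" "i \<noteq> j" for i j
    using that owner chosen_disjoint_same_level
    by (cases "i < j") (metis Int_commute linorder_neqE_nat)+
  have "finite S" by (simp add: S_def)
  have "sum c S < sum b V / 2 powi (r - 1)"
  proof (cases "S = {}")
    case True
    then show ?thesis using assms(2) fin bpos by (simp add: sum_pos)
  next
    case False
    have "sum c S < (\<Sum>t\<in>S. sum b (chosen t) / 2 powi (r - 1))"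
      using cost \<open>finite S\<close> False by (intro sum_strict_mono) auto
    also have "\<dots> = (\<Sum>t\<in>S. sum b (chosen t)) / 2 powi (r - 1)"
      by (simp add: sum_divide_distrib)
    also have "\<dots> \<le> sum b V / 2 powi (r - 1)"
      using fin \<open>finite S\<close> bpos chosen_V disjoint
      by (intro divide_right_mono sum_disjoint_family_le) (auto intro: less_imp_le)
    finally show ?thesis .
  qed
  then show ?thesis by (simp add: S_def)
qed

end
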